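(* For every integer $n\ge 0$, \[ \sum_{k=0}^{n}\Big(-\frac{1}{4}\Big)^k\binom{n}{k}\binom{2k}{k}\,k\,H_{2k} =\frac{n}{(1-2n)2^{1+2n}}\binom{2n}{n}\Big\{3H_n-4H_{2n}-\frac{2+4n}{1-2n}\Big\}. \]
   Context: For an integer $m\ge 0$, $H_m$ denotes the $m$-th harmonic number: $H_0=0$ and $H_m=\sum_{j=1}^m \frac1j$ for $m\ge1$. $\binom{n}{k}$ is the usual binomial coefficient. *)

theory Defs
  imports "HOL-Analysis.Analysis"
begin

end

theory Submission
  imports Defs
begin

text \<open>
  Creative telescoping.  Write \<open>c_k = (-1/4)^k binom(2k,k)\<close>,
  \<open>F(n,k) = binom(n,k) k c_k H_{2k}\<close> and \<open>P(n,k) = binom(n,k) k c_k\<close>.  With explicit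
  certificates \<open>G\<close>, \<open>G0\<close> vanishing at \<open>k = 0\<close> and \<open>k = n + 2\<close>,
    \<open>4n(n+1) F(n+1,k) - 2(2n-1)(n+1) F(n,k) + (2n+5) P(n,k) = G(n,k+1) - G(n,k)\<close>,
    \<open>4n(n+1) P(n+1,k) - 2(2n-1)(n+1) P(n,k) = G0(n,k+1) - G0(n,k)\<close>,
  so summing over \<open>k\<close> yields first-order recurrences in \<open>n\<close> for both sums.  The second
  solves to \<open>\<Sum>k P(n,k) = -binom(2n-2,n-1) / (2 * 4^(n-1))\<close> for \<open>n \<ge> 1\<close>, and the claimed
  closed form of \<open>\<Sum>k F(n,k)\<close> is checked by induction against the first, inhomogeneous one.
\<close>

lemma Suc_times_central_binomial:
  "Suc k * ((2 * Suc k) choose Suc k) = 2 * (2 * k + 1) * ((2 * k) choose k)"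
proof -
  have "Suc k * (Suc k * ((2 * Suc k) choose Suc k))
      = Suc k * (Suc (Suc (2 * k)) * (Suc (2 * k) choose k))"
    using Suc_times_binomial[of k "Suc (2 * k)"] by (simp del: binomial_Suc_Suc)
  also have "Suc (2 * k) choose k = Suc (2 * k) choose Suc k"
    using binomial_symmetric[of k "Suc (2 * k)"] by (simp del: binomial_Suc_Suc)
  also have "Suc k * (Suc (Suc (2 * k)) * (Suc (2 * k) choose Suc k))
      = Suc (Suc (2 * k)) * (Suc (2 * k) * ((2 * k) choose k))"
    using Suc_times_binomial[of k "2 * k"] by (metis mult.left_commute)
  also have "\<dots> = Suc k * (2 * (2 * k + 1) * ((2 * k) choose k))"
    by simp
  finally show ?thesis
    by (simp only: mult_left_cancel nat.distinct(2) simp_thms)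
qed

lemma of_nat_central_binomial_Suc:
  "real ((2 * Suc k) choose Suc k) = 2 * (2 * real k + 1) / (real k + 1) * real ((2 * k) choose k)"
proof -
  have "real (Suc k) * real ((2 * Suc k) choose Suc k) = 2 * (2 * real k + 1) * real ((2 * k) choose k)"
    using arg_cong[OF Suc_times_central_binomial[of k], of real]
    by (simp add: algebra_simps del: binomial_Suc_Suc)
  then show ?thesis
    by (simp add: field_simps del: binomial_Suc_Suc)
qed

lemma of_nat_choose_Suc:
  "real (n choose Suc k) = real (n choose k) * (real n - real k) / (real k + 1)"
proof -
  have "real (Suc k) * (real (n choose k) + real (n choose Suc k)) = real (Suc n) * real (n choose k)"
    using Suc_times_binomial[of k n] by (metis binomial_Suc_Suc of_nat_add of_nat_mult)
  then show ?thesis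
    by (simp add: field_simps)
qed

lemma harm_double_Suc:
  "harm (2 * Suc k) = (harm (2 * k) :: real) + 1 / (2 * real k + 1) + 1 / (2 * real k + 2)"
  by (simp add: harm_Suc field_simps)

definition central_coeff :: "nat \<Rightarrow> real" where
  "central_coeff k = (-1/4) ^ k * real ((2 * k) choose k)"

lemma central_coeff_Suc:
  "central_coeff (Suc k) = - (2 * real k + 1) / (2 * real k + 2) * central_coeff k"
  unfolding central_coeff_def of_nat_central_binomial_Suc by (simp add: field_simps)

definition harm_sum :: "nat \<Rightarrow> real" where
  "harm_sum n = (\<Sum>k=0..n. real (n choose k) * real k * central_coeff k * harm (2 * k))"

definition plain_sum :: "nat \<Rightarrow> real" where
  "plain_sum n = (\<Sum>k=0..n. real (n choose k) * real k * central_coeff k)"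

text \<open>The certificates are those produced by Zeilberger's algorithm.\<close>

fun harm_sum_cert :: "nat \<Rightarrow> nat \<Rightarrow> real" where
  "harm_sum_cert n 0 = 0"
| "harm_sum_cert n (Suc k) = real (n choose k) * central_coeff (Suc k)
     * (2 * real k * (real n - real k) - 4 * (real n + 1) * real k * (real k + 1) * harm (2 * Suc k))"

fun plain_sum_cert :: "nat \<Rightarrow> nat \<Rightarrow> real" where
  "plain_sum_cert n 0 = 0"
| "plain_sum_cert n (Suc k) =
     - 4 * (real n + 1) * real k * (real k + 1) * real (n choose k) * central_coeff (Suc k)"

lemma harm_sum_cert_telescoping:
  "4 * real n * (real n + 1) * (real (Suc n choose k) * real k * central_coeff k * harm (2 * k))
   - 2 * (2 * real n - 1) * (real n + 1) * (real (n choose k) * real k * central_coeff k * harm (2 * k))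
   + (2 * real n + 5) * (real (n choose k) * real k * central_coeff k)
   = harm_sum_cert n (Suc k) - harm_sum_cert n k"
proof (cases k)
  case 0
  then show ?thesis by simp
next
  case (Suc j)
  have binom: "(real j + 1) * real (n choose Suc j) = real (n choose j) * (real n - real j)"
    unfolding of_nat_choose_Suc by simp
  have coeff: "(2 * real j + 4) * central_coeff (Suc (Suc j)) = - (2 * real j + 3) * central_coeff (Suc j)"
    unfolding central_coeff_Suc[of "Suc j"] by (simp add: field_simps)
  have harm: "harm (2 * Suc (Suc j)) = harm (2 * Suc j) + 1 / (2 * real j + 3) + 1 / (2 * real j + 4)"
    unfolding harm_double_Suc[of "Suc j"] by (simp add: algebra_simps)
  have inv: "(2 * real j + 3) * (1 / (2 * real j + 3)) = 1" "(2 * real j + 4) * (1 / (2 * real j + 4)) = 1"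
    by simp_all
  show ?thesis
    unfolding Suc binomial_Suc_Suc of_nat_add of_nat_Suc harm_sum_cert.simps harm
    using binom coeff inv by algebra
qed

lemma plain_sum_cert_telescoping:
  "4 * real n * (real n + 1) * (real (Suc n choose k) * real k * central_coeff k)
   - 2 * (2 * real n - 1) * (real n + 1) * (real (n choose k) * real k * central_coeff k)
   = plain_sum_cert n (Suc k) - plain_sum_cert n k"
proof (cases k)
  case 0
  then show ?thesis by simp
next
  case (Suc j)
  have binom: "(real j + 1) * real (n choose Suc j) = real (n choose j) * (real n - real j)"
    unfolding of_nat_choose_Suc by simp
  have coeff: "(2 * real j + 4) * central_coeff (Suc (Suc j)) = - (2 * real j + 3) * central_coeff (Suc j)"
    unfolding central_coeff_Suc[of "Suc j"] by (simp add: field_simps)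
  have inv: "(2 * real j + 4) * (1 / (2 * real j + 4)) = 1"
    by simp
  show ?thesis
    unfolding Suc binomial_Suc_Suc of_nat_add of_nat_Suc plain_sum_cert.simps
    using binom coeff inv by algebra
qed

lemma harm_sum_recurrence:
  "4 * real n * (real n + 1) * harm_sum (Suc n) - 2 * (2 * real n - 1) * (real n + 1) * harm_sum n
   + (2 * real n + 5) * plain_sum n = 0"
proof -
  have extend: "harm_sum n = (\<Sum>k=0..Suc n. real (n choose k) * real k * central_coeff k * harm (2 * k))"
    "plain_sum n = (\<Sum>k=0..Suc n. real (n choose k) * real k * central_coeff k)"
    by (simp_all add: harm_sum_def plain_sum_def binomial_eq_0)
  have "4 * real n * (real n + 1) * harm_sum (Suc n) - 2 * (2 * real n - 1) * (real n + 1) * harm_sum n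
      + (2 * real n + 5) * plain_sum n = (\<Sum>k=0..Suc n. harm_sum_cert n (Suc k) - harm_sum_cert n k)"
    unfolding extend harm_sum_def[of "Suc n"] harm_sum_cert_telescoping[symmetric]
    by (simp only: sum.distrib sum_subtractf sum_distrib_left)
  also have "\<dots> = 0"
    by (subst sum_Suc_diff) (simp_all add: binomial_eq_0)
  finally show ?thesis .
qed

lemma plain_sum_recurrence:
  "4 * real n * (real n + 1) * plain_sum (Suc n) - 2 * (2 * real n - 1) * (real n + 1) * plain_sum n = 0"
proof -
  have extend: "plain_sum n = (\<Sum>k=0..Suc n. real (n choose k) * real k * central_coeff k)"
    by (simp add: plain_sum_def binomial_eq_0)
  have "4 * real n * (real n + 1) * plain_sum (Suc n) - 2 * (2 * real n - 1) * (real n + 1) * plain_sum n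
      = (\<Sum>k=0..Suc n. plain_sum_cert n (Suc k) - plain_sum_cert n k)"
    unfolding extend plain_sum_def[of "Suc n"] plain_sum_cert_telescoping[symmetric]
    by (simp only: sum_subtractf sum_distrib_left)
  also have "\<dots> = 0"
    by (subst sum_Suc_diff) (simp_all add: binomial_eq_0)
  finally show ?thesis .
qed

lemma plain_sum_closed_form: "plain_sum (Suc m) = - real ((2 * m) choose m) / (2 * 4 ^ m)"
proof (induction m)
  case 0
  show ?case by (simp add: plain_sum_def central_coeff_def)
next
  case (Suc m)
  have "(real m + 2) * (4 * (real m + 1) * plain_sum (Suc (Suc m)) - 2 * (2 * real m + 1) * plain_sum (Suc m)) = 0"
    using plain_sum_recurrence[of "Suc m"] by (simp add: algebra_simps)
  moreover have "real m + 2 \<noteq> 0" by simp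
  ultimately have "plain_sum (Suc (Suc m)) * (4 * (real m + 1)) = 2 * (2 * real m + 1) * plain_sum (Suc m)"
    by (metis mult_eq_0_iff mult.commute right_minus_eq)
  then have "plain_sum (Suc (Suc m)) = 2 * (2 * real m + 1) * plain_sum (Suc m) / (4 * (real m + 1))"
    by (rule eq_divide_imp[rotated]) simp
  then show ?case
    unfolding Suc.IH of_nat_central_binomial_Suc by (simp add: field_simps)
qed

lemma harm_sum_closed_form:
  "harm_sum (Suc m) = real (Suc m) / ((1 - 2 * real (Suc m)) * 2 ^ (1 + 2 * Suc m))
      * real ((2 * Suc m) choose Suc m)
      * (3 * harm (Suc m) - 4 * harm (2 * Suc m) - (2 + 4 * real (Suc m)) / (1 - 2 * real (Suc m)))"
proof (induction m)
  case 0
  show ?case by (simp add: harm_sum_def central_coeff_def harm_expand)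
next
  case (Suc m)
  define y where "y = real m"
  define C where "C = real ((2 * m) choose m)"
  define P :: real where "P = 2 ^ (1 + 2 * Suc m)"
  have "harm_sum (Suc (Suc m)) * (4 * (y + 1) * (y + 2))
      = 2 * (2 * y + 1) * (y + 2) * harm_sum (Suc m) - (2 * y + 7) * plain_sum (Suc m)"
    using harm_sum_recurrence[of "Suc m"] unfolding y_def by (simp add: algebra_simps)
  then have rec: "harm_sum (Suc (Suc m)) = (2 * (2 * y + 1) * (y + 2) * harm_sum (Suc m)
      - (2 * y + 7) * plain_sum (Suc m)) / (4 * (y + 1) * (y + 2))"
    by (rule eq_divide_imp[rotated]) (simp add: y_def)
  have plain: "plain_sum (Suc m) = - 4 * C / P"
    unfolding plain_sum_closed_form P_def C_def by (simp add: power_add power_mult)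
  have P: "(2::real) ^ (1 + 2 * Suc (Suc m)) = 4 * P" "P > 0"
    unfolding P_def by (simp_all add: power_add)
  have C1: "real ((2 * Suc m) choose Suc m) = 2 * (2 * y + 1) / (y + 1) * C"
    unfolding of_nat_central_binomial_Suc y_def C_def ..
  have C2: "real ((2 * Suc (Suc m)) choose Suc (Suc m))
      = 2 * (2 * y + 3) / (y + 2) * (2 * (2 * y + 1) / (y + 1) * C)"
    unfolding of_nat_central_binomial_Suc[of "Suc m"] C1 by (simp add: y_def algebra_simps)
  have H: "harm (Suc (Suc m)) = harm (Suc m) + 1 / (y + 2)"
    "harm (2 * Suc (Suc m)) = harm (2 * Suc m) + 1 / (2 * y + 3) + 1 / (2 * y + 4)"
    unfolding y_def by (simp_all add: harm_Suc harm_double_Suc[of "Suc m"] field_simps)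
  have nz: "y + 1 \<noteq> 0" "y + 2 \<noteq> 0" "2 * y + 1 \<noteq> 0" "2 * y + 3 \<noteq> 0" "2 * y + 4 \<noteq> 0"
    "1 - 2 * (y + 1) \<noteq> 0" "1 - 2 * (y + 1 + 1) \<noteq> 0" "P \<noteq> 0"
    using P(2) by (simp_all add: y_def)
  show ?case
    unfolding rec Suc.IH plain C1 C2 H P(1) of_nat_Suc y_def[symmetric] P_def[symmetric]
    using nz by (simp add: divide_simps) algebra
qed

theorem theorem8:
  fixes n :: nat
  shows "(\<Sum>k=0..n. (-1/4::real)^k * real (n choose k) * real ((2*k) choose k) * real k * harm (2*k))
    = real n / ((1 - 2 * real n) * 2 ^ (1 + 2*n)) * real ((2*n) choose n)
      * (3 * harm n - 4 * harm (2*n) - (2 + 4 * real n) / (1 - 2 * real n))"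
proof -
  have "(\<Sum>k=0..n. (-1/4::real)^k * real (n choose k) * real ((2*k) choose k) * real k * harm (2*k))
      = harm_sum n"
    unfolding harm_sum_def central_coeff_def by (rule sum.cong) (simp_all add: mult_ac)
  also have "\<dots> = real n / ((1 - 2 * real n) * 2 ^ (1 + 2*n)) * real ((2*n) choose n)
      * (3 * harm n - 4 * harm (2*n) - (2 + 4 * real n) / (1 - 2 * real n))"
  proof (cases n)
    case 0
    then show ?thesis by (simp add: harm_sum_def)
  next
    case (Suc m)
    then show ?thesis by (simp only: harm_sum_closed_form)
  qed
  finally show ?thesis .
qed

end
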